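(* Let $k$ be a field with $\mathrm{char}(k)\ne2$ and let $n\ge4$. There exists an $n\times n$ quantum parameter matrix $\mathfrak{q}$ such that $\mathrm{Aut}_{\mathrm{gr}}(S_{\mathfrak{q}}(k^n))\cong(k^\times)^n\rtimes D_{2n}$.
   Context: An $n\times n$ quantum parameter matrix is a matrix $\mathfrak{q}=(q_{ij})$ over $k$ with $q_{ii}=1$ and $q_{ij}q_{ji}=1$ for all $i,j$. $S_{\mathfrak{q}}(k^n)$ is the $k$-algebra generated by the standard basis $v_1,\dots,v_n$ of $k^n$ with relations $v_jv_i=q_{ij}v_iv_j$, graded by $\deg v_i=1$; $\mathrm{Aut}_{\mathrm{gr}}$ denotes its group of degree-preserving algebra automorphisms, viewed as a subgroup of $\mathrm{GL}(n,k)$. $D_{2n}$ is the dihedral group of order $2n$, viewed as the subgroup of $\mathfrak{S}_n$ generated by $(1\,2\,\cdots\,n)$ and $i\mapsto 1-i \bmod n$; in $(k^\times)^n\rtimes D_{2n}$, $(k^\times)^n$ is the group of invertible diagonal matrices and $D_{2n}$ acts by permuting coordinates (the product is realized as a group of monomial matrices). *)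

theory Defs
  imports "Jordan_Normal_Form.Matrix" "HOL-Algebra.Sym_Groups"
begin

definition quantum_param :: "nat \<Rightarrow> 'k::field mat \<Rightarrow> bool" where
  "quantum_param n q \<longleftrightarrow> q \<in> carrier_mat n n \<and> (\<forall>i<n. q $$ (i,i) = 1)
     \<and> (\<forall>i<n. \<forall>j<n. q $$ (i,j) * q $$ (j,i) = 1)"

(* Elements of k^n (x) k^n are encoded as n x n matrices T, T = sum T_ab v_a (x) v_b.
   The defining relation v_j v_i - q_ij v_i v_j of S_q(k^n) is the tensor
   v_j (x) v_i - q_ij v_i (x) v_j. *)
definition rel_tensor :: "nat \<Rightarrow> 'k::field mat \<Rightarrow> nat \<Rightarrow> nat \<Rightarrow> 'k mat" where
  "rel_tensor n q i j = mat n n (\<lambda>(a,b). (if (a,b) = (j,i) then 1 else 0)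
                                        - (if (a,b) = (i,j) then q $$ (i,j) else 0))"

(* R = span of the relations, the degree-2 part of the ideal of relations
   (S_q(k^n) = T(k^n)/(R)). *)
definition rel_space :: "nat \<Rightarrow> 'k::field mat \<Rightarrow> 'k mat set" where
  "rel_space n q = {T. T \<in> carrier_mat n n \<and> (\<exists>c. \<forall>a<n. \<forall>b<n.
      T $$ (a,b) = (\<Sum>i<n. \<Sum>j<n. c i j * rel_tensor n q i j $$ (a,b)))}"

(* g (x) g acting on k^n (x) k^n, in the matrix encoding: T |-> g T g^t,
   where g v_a = sum_l g_la v_l. *)
definition preserves_rel :: "nat \<Rightarrow> 'k::field mat \<Rightarrow> 'k mat \<Rightarrow> bool" where
  "preserves_rel n q g \<longleftrightarrow> (\<forall>T \<in> rel_space n q. g * T * transpose_mat g \<in> rel_space n q)"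

(* Aut_gr(S_q(k^n)) as a subgroup of GL(n,k): a linear map g of k^n = degree-1 part
   extends to an algebra endomorphism of the quadratic algebra iff (g (x) g)(R) \<subseteq> R;
   it is a graded automorphism iff it is bijective, i.e. g is invertible and its
   inverse also extends to an algebra endomorphism. *)
definition Aut_gr :: "nat \<Rightarrow> 'k::field mat \<Rightarrow> 'k mat monoid" where
  "Aut_gr n q = \<lparr> carrier = {g \<in> carrier_mat n n. \<exists>h \<in> carrier_mat n n.
        g * h = 1\<^sub>m n \<and> h * g = 1\<^sub>m n \<and> preserves_rel n q g \<and> preserves_rel n q h},
      mult = (*), one = 1\<^sub>m n \<rparr>"

(* Dihedral group D_2n inside S_n (permutations of {1..n}), generated by the
   n-cycle (1 2 ... n) and the reflection i |-> 1 - i mod n. *)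
definition rot_perm :: "nat \<Rightarrow> nat \<Rightarrow> nat" where
  "rot_perm n i = (if 1 \<le> i \<and> i < n then i + 1 else if i = n then 1 else i)"

definition refl_perm :: "nat \<Rightarrow> nat \<Rightarrow> nat" where
  "refl_perm n i = (if 1 \<le> i \<and> i \<le> n then
      (if (n + 1 - i) mod n = 0 then n else (n + 1 - i) mod n) else i)"

definition dihedral :: "nat \<Rightarrow> (nat \<Rightarrow> nat) set" where
  "dihedral n = generate (sym_group n) {rot_perm n, refl_perm n}"

(* Permutation matrix of sigma (a permutation of {1..n}), sending e_j to e_sigma(j);
   matrix indices are 0-based, so entry (a,b) corresponds to (a+1,b+1). *)
definition perm_matrix :: "nat \<Rightarrow> (nat \<Rightarrow> nat) \<Rightarrow> 'k::field mat" where
  "perm_matrix n \<sigma> = mat n n (\<lambda>(a,b). if a + 1 = \<sigma> (b + 1) then 1 else 0)"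

definition diag_matrix :: "nat \<Rightarrow> (nat \<Rightarrow> 'k::field) \<Rightarrow> 'k mat" where
  "diag_matrix n d = mat n n (\<lambda>(a,b). if a = b then d a else 0)"

(* (k^x)^n \<rtimes> D_2n realized as the group of monomial matrices diag(d) * P_sigma. *)
definition monomial_dihedral :: "nat \<Rightarrow> 'k::field mat monoid" where
  "monomial_dihedral n = \<lparr> carrier = {diag_matrix n d * perm_matrix n \<sigma> | d \<sigma>.
        (\<forall>i<n. d i \<noteq> 0) \<and> \<sigma> \<in> dihedral n},
      mult = (*), one = 1\<^sub>m n \<rparr>"

end

theory Submission
  imports Defs "Jordan_Normal_Form.Determinant"
begin

text \<open>Take \<open>q\<^sub>i\<^sub>j = -1\<close> if \<open>i \<noteq> j\<close> are not adjacent on the \<open>n\<close>-cycle and \<open>q\<^sub>i\<^sub>j = 1\<close> otherwise,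
  i.e. the sign matrix of the complement \<open>E\<close> of the cycle graph. A matrix \<open>g\<close> preserves the
  relations iff \<open>(1 - q\<^sub>a\<^sub>b q\<^sub>i\<^sub>j) g\<^sub>a\<^sub>j g\<^sub>b\<^sub>i + (q\<^sub>a\<^sub>b - q\<^sub>i\<^sub>j) g\<^sub>a\<^sub>i g\<^sub>b\<^sub>j = 0\<close> for all \<open>i, j, a, b\<close>;
  for an edge \<open>ij\<close> and a non-edge \<open>ab\<close> of \<open>E\<close> this forces \<open>g\<^sub>a\<^sub>j g\<^sub>b\<^sub>i = 0\<close> (using \<open>char k \<noteq> 2\<close>).
  If \<open>g\<close> is invertible, a nonzero term of \<open>det g\<close> gives a permutation \<open>p\<close> with all
  \<open>g(x, p x) \<noteq> 0\<close>. Then \<open>p\<close> maps non-edges to non-edges, so by finiteness it is an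
  automorphism of \<open>E\<close>; and since for \<open>n \<ge> 4\<close> no neighbourhood in \<open>E\<close> contains another one,
  the support of \<open>g\<close> is exactly the graph of \<open>p\<close>.
  Conversely every monomial matrix whose permutation preserves \<open>q\<close> preserves the relations.
  So \<open>Aut\<^sub>g\<^sub>r\<close> consists of the monomial matrices over automorphisms of the \<open>n\<close>-cycle,
  and these automorphisms form \<open>D\<^sub>2\<^sub>n\<close>.\<close>

section \<open>The relation space\<close>

lemma rel_tensor_entry:
  assumes "a < n" "b < n"
  shows "rel_tensor n q i j $$ (a,b) =
    (if a = j \<and> b = i then 1 else 0) - (if a = i \<and> b = j then q $$ (i,j) else 0)"
  using assms by (auto simp: rel_tensor_def)

lemma rel_tensor_combination_entry:
  assumes "a < n" "b < n"
  shows "(\<Sum>i<n. \<Sum>j<n. c i j * rel_tensor n q i j $$ (a,b)) = c b a - q $$ (a,b) * c a b"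
proof -
  have "(\<Sum>i<n. \<Sum>j<n. c i j * rel_tensor n q i j $$ (a,b))
      = (\<Sum>i<n. (\<Sum>j<n. if j = a then (if i = b then c i j else 0) else 0)
                 - (\<Sum>j<n. if j = b then (if i = a then c i j * q $$ (i,j) else 0) else 0))"
    unfolding sum_subtractf[symmetric]
    by (intro sum.cong refl) (simp add: rel_tensor_entry assms right_diff_distrib)
  also have "\<dots> = (\<Sum>i<n. (if i = b then c i a else 0) - (if i = a then c i b * q $$ (i,b) else 0))"
    using assms by (simp only: sum.delta lessThan_iff finite_lessThan if_True)
  also have "\<dots> = c b a - q $$ (a,b) * c a b"
    using assms by (simp add: sum_subtractf sum.delta)
  finally show ?thesis .
qed

definition q_skew :: "nat \<Rightarrow> 'k::field mat \<Rightarrow> 'k mat \<Rightarrow> bool" where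
  "q_skew n q T \<longleftrightarrow> (\<forall>a<n. \<forall>b<n. T $$ (a,b) + q $$ (a,b) * T $$ (b,a) = 0)"

lemma q_skew_if_mem_rel_space:
  assumes qp: "quantum_param n q" and T: "T \<in> rel_space n q"
  shows "q_skew n q T"
  unfolding q_skew_def
proof (intro allI impI)
  fix a b assume ab: "a < n" "b < n"
  obtain c where c: "\<forall>a<n. \<forall>b<n. T $$ (a,b) = (\<Sum>i<n. \<Sum>j<n. c i j * rel_tensor n q i j $$ (a,b))"
    using T unfolding rel_space_def by auto
  have qq: "q $$ (a,b) * q $$ (b,a) = 1" using qp ab unfolding quantum_param_def by auto
  have e1: "T $$ (a,b) = c b a - q $$ (a,b) * c a b"
    using c ab rel_tensor_combination_entry[of a n b c q] by simp
  have e2: "T $$ (b,a) = c a b - q $$ (b,a) * c b a"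
    using c ab rel_tensor_combination_entry[of b n a c q] by simp
  have "T $$ (a,b) + q $$ (a,b) * T $$ (b,a) = c b a * (1 - q $$ (a,b) * q $$ (b,a))"
    unfolding e1 e2 by (simp add: algebra_simps)
  then show "T $$ (a,b) + q $$ (a,b) * T $$ (b,a) = 0" using qq by simp
qed

lemma mem_rel_space_if_q_skew:
  fixes q :: "'k::field mat"
  assumes qp: "quantum_param n q" and two: "(2::'k) \<noteq> 0"
    and T: "T \<in> carrier_mat n n" and "q_skew n q T"
  shows "T \<in> rel_space n q"
proof -
  have skew: "\<And>a b. a < n \<Longrightarrow> b < n \<Longrightarrow> T $$ (a,b) + q $$ (a,b) * T $$ (b,a) = 0"
    using \<open>q_skew n q T\<close> unfolding q_skew_def by auto
  define c where "c i j = (if i < j then T $$ (j,i) else 0)" for i j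
  have "T $$ (a,b) = (\<Sum>i<n. \<Sum>j<n. c i j * rel_tensor n q i j $$ (a,b))"
    if ab: "a < n" "b < n" for a b
  proof -
    have "T $$ (a,b) = c b a - q $$ (a,b) * c a b"
    proof (cases a b rule: linorder_cases)
      case less
      then show ?thesis using skew[OF ab] by (simp add: c_def eq_neg_iff_add_eq_0)
    next
      case equal
      have "q $$ (a,a) = 1" using qp ab unfolding quantum_param_def by auto
      then have "T $$ (a,a) + T $$ (a,a) = 0" using skew[OF ab(1) ab(1)] by simp
      then have "2 * T $$ (a,a) = 0" by (metis mult_2)
      then show ?thesis using two equal by (simp add: c_def)
    next
      case greater
      then show ?thesis by (simp add: c_def)
    qed
    then show ?thesis using rel_tensor_combination_entry[OF ab, of c q] by simp
  qed
  then show "T \<in> rel_space n q" using T unfolding rel_space_def by blast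
qed

lemma rel_space_eq:
  fixes q :: "'k::field mat"
  assumes "quantum_param n q" "(2::'k) \<noteq> 0"
  shows "rel_space n q = {T \<in> carrier_mat n n. q_skew n q T}"
  using q_skew_if_mem_rel_space[OF assms(1)] mem_rel_space_if_q_skew[OF assms]
  unfolding rel_space_def by blast

lemma rel_tensor_carrier: "rel_tensor n q i j \<in> carrier_mat n n"
  by (simp add: rel_tensor_def)

lemma q_skew_rel_tensor:
  assumes "quantum_param n q" "i < n" "j < n"
  shows "q_skew n q (rel_tensor n q i j)"
  unfolding q_skew_def
proof (intro allI impI)
  fix a b assume ab: "a < n" "b < n"
  have q: "q $$ (i,j) * q $$ (j,i) = 1" "q $$ (i,i) = 1"
    using assms unfolding quantum_param_def by auto
  show "rel_tensor n q i j $$ (a,b) + q $$ (a,b) * rel_tensor n q i j $$ (b,a) = 0"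
  proof (cases "i = j")
    case True
    then show ?thesis using ab q by (simp add: rel_tensor_entry)
  next
    case False
    consider "a = j" "b = i" | "a = i" "b = j" | "\<not> (a = j \<and> b = i)" "\<not> (a = i \<and> b = j)"
      by blast
    then show ?thesis
    proof cases
      case 1
      then show ?thesis using ab q False by (simp add: rel_tensor_entry mult.commute)
    next
      case 2
      then show ?thesis using ab False by (simp add: rel_tensor_entry)
    next
      case 3
      then show ?thesis using ab False by (simp add: rel_tensor_entry) (metis)
    qed
  qed
qed

lemma conj_transpose_entry:
  fixes g T :: "'a::comm_semiring_0 mat"
  assumes "g \<in> carrier_mat n n" "T \<in> carrier_mat n n" "a < n" "b < n"
  shows "(g * T * transpose_mat g) $$ (a,b) = (\<Sum>e<n. \<Sum>c<n. T $$ (e,c) * (g $$ (a,e) * g $$ (b,c)))"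
proof -
  have "(g * T * transpose_mat g) $$ (a,b) = row (g * T) a \<bullet> col (transpose_mat g) b"
    using assms by (intro index_mult_mat(1)) auto
  also have "\<dots> = (\<Sum>c<n. (\<Sum>e<n. g $$ (a,e) * T $$ (e,c)) * g $$ (b,c))"
    using assms by (simp add: scalar_prod_def atLeast0LessThan)
  also have "\<dots> = (\<Sum>c<n. \<Sum>e<n. T $$ (e,c) * (g $$ (a,e) * g $$ (b,c)))"
    unfolding sum_distrib_right by (simp add: mult_ac)
  also have "\<dots> = (\<Sum>e<n. \<Sum>c<n. T $$ (e,c) * (g $$ (a,e) * g $$ (b,c)))"
    by (rule sum.swap)
  finally show ?thesis .
qed

lemma conj_rel_tensor_entry:
  assumes g: "g \<in> carrier_mat n n" and idx: "i < n" "j < n" "a < n" "b < n"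
  shows "(g * rel_tensor n q i j * transpose_mat g) $$ (a,b)
    = g $$ (a,j) * g $$ (b,i) - q $$ (i,j) * (g $$ (a,i) * g $$ (b,j))"
proof -
  have "(g * rel_tensor n q i j * transpose_mat g) $$ (a,b)
      = (\<Sum>e<n. \<Sum>c<n. (if c = i then if e = j then g $$ (a,j) * g $$ (b,i) else 0 else 0)
               - (if c = j then if e = i then q $$ (i,j) * (g $$ (a,i) * g $$ (b,j)) else 0 else 0))"
    unfolding conj_transpose_entry[OF g rel_tensor_carrier idx(3,4)]
    by (intro sum.cong refl) (auto simp: rel_tensor_entry algebra_simps)
  also have "\<dots> = g $$ (a,j) * g $$ (b,i) - q $$ (i,j) * (g $$ (a,i) * g $$ (b,j))"
    using idx by (simp add: sum_subtractf sum.delta algebra_simps)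
  finally show ?thesis .
qed

text \<open>\<open>rel_defect q g i j a b\<close> is the \<open>(a,b)\<close>-component of the \<open>q\<close>-skewness condition for
  \<open>(g \<otimes> g)(v\<^sub>j \<otimes> v\<^sub>i - q\<^sub>i\<^sub>j v\<^sub>i \<otimes> v\<^sub>j)\<close>.\<close>

definition rel_defect :: "'k::field mat \<Rightarrow> 'k mat \<Rightarrow> nat \<Rightarrow> nat \<Rightarrow> nat \<Rightarrow> nat \<Rightarrow> 'k" where
  "rel_defect q g i j a b = (1 - q $$ (a,b) * q $$ (i,j)) * (g $$ (a,j) * g $$ (b,i))
     + (q $$ (a,b) - q $$ (i,j)) * (g $$ (a,i) * g $$ (b,j))"

lemma rel_defect_eq:
  assumes g: "g \<in> carrier_mat n n" and idx: "i < n" "j < n" "a < n" "b < n"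
  shows "(g * rel_tensor n q i j * transpose_mat g) $$ (a,b)
      + q $$ (a,b) * (g * rel_tensor n q i j * transpose_mat g) $$ (b,a) = rel_defect q g i j a b"
  unfolding conj_rel_tensor_entry[OF g idx] conj_rel_tensor_entry[OF g idx(1,2,4,3)] rel_defect_def
  by (simp add: algebra_simps)

lemma q_skew_conj_if_rel_defect_zero:
  fixes q :: "'k::field mat"
  assumes two: "(2::'k) \<noteq> 0" and g: "g \<in> carrier_mat n n" and T: "T \<in> carrier_mat n n"
    and "q_skew n q T"
    and D: "\<And>i j a b. i < n \<Longrightarrow> j < n \<Longrightarrow> a < n \<Longrightarrow> b < n \<Longrightarrow> rel_defect q g i j a b = 0"
  shows "q_skew n q (g * T * transpose_mat g)"
  unfolding q_skew_def
proof (intro allI impI)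
  fix a b assume ab: "a < n" "b < n"
  have skew: "T $$ (c,e) = - (q $$ (c,e) * T $$ (e,c))" if "e < n" "c < n" for e c
    using \<open>q_skew n q T\<close> that unfolding q_skew_def by (simp add: eq_neg_iff_add_eq_0)
  define f where "f e c = T $$ (e,c) * (g $$ (a,e) * g $$ (b,c) + q $$ (a,b) * (g $$ (b,e) * g $$ (a,c)))"
    for e c
  have S: "(g * T * transpose_mat g) $$ (a,b) + q $$ (a,b) * (g * T * transpose_mat g) $$ (b,a)
      = (\<Sum>e<n. \<Sum>c<n. f e c)"
    unfolding conj_transpose_entry[OF g T ab] conj_transpose_entry[OF g T ab(2,1)] f_def
    by (simp add: sum.distrib sum_distrib_left algebra_simps)
  \<comment> \<open>the summands for \<open>(e,c)\<close> and \<open>(c,e)\<close> add up to \<open>T\<^sub>e\<^sub>c\<close> times a defect\<close>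
  have pair: "f e c + f c e = T $$ (e,c) * rel_defect q g c e a b" if "e < n" "c < n" for e c
    unfolding f_def rel_defect_def skew[OF that] by (simp add: algebra_simps)
  have sw: "(\<Sum>e<n. \<Sum>c<n. f c e) = (\<Sum>e<n. \<Sum>c<n. f e c)"
    by (rule sum.swap)
  have "2 * (\<Sum>e<n. \<Sum>c<n. f e c) = (\<Sum>e<n. \<Sum>c<n. f e c + f c e)"
    unfolding mult_2 sum.distrib sw ..
  also have "\<dots> = 0"
    using D ab by (intro sum.neutral ballI) (simp add: pair)
  finally show "(g * T * transpose_mat g) $$ (a,b) + q $$ (a,b) * (g * T * transpose_mat g) $$ (b,a) = 0"
    using S two by simp
qed

lemma preserves_rel_iff:
  fixes q :: "'k::field mat"
  assumes qp: "quantum_param n q" and two: "(2::'k) \<noteq> 0" and g: "g \<in> carrier_mat n n"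
  shows "preserves_rel n q g \<longleftrightarrow>
    (\<forall>i<n. \<forall>j<n. \<forall>a<n. \<forall>b<n. rel_defect q g i j a b = 0)"
proof
  assume P: "preserves_rel n q g"
  show "\<forall>i<n. \<forall>j<n. \<forall>a<n. \<forall>b<n. rel_defect q g i j a b = 0"
  proof (intro allI impI)
    fix i j a b assume idx: "i < n" "j < n" "a < n" "b < n"
    have "rel_tensor n q i j \<in> rel_space n q"
      by (rule mem_rel_space_if_q_skew[OF qp two rel_tensor_carrier q_skew_rel_tensor[OF qp idx(1,2)]])
    then have "q_skew n q (g * rel_tensor n q i j * transpose_mat g)"
      using P q_skew_if_mem_rel_space[OF qp] unfolding preserves_rel_def by blast
    then show "rel_defect q g i j a b = 0"
      using idx unfolding q_skew_def rel_defect_eq[OF g idx, symmetric] by blast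
  qed
next
  assume "\<forall>i<n. \<forall>j<n. \<forall>a<n. \<forall>b<n. rel_defect q g i j a b = 0"
  then show "preserves_rel n q g"
    unfolding preserves_rel_def rel_space_eq[OF qp two]
    using q_skew_conj_if_rel_defect_zero[OF two g] g by auto
qed

section \<open>Monomial matrices\<close>

definition monomial_mat :: "nat \<Rightarrow> (nat \<Rightarrow> nat) \<Rightarrow> (nat \<Rightarrow> 'a::zero) \<Rightarrow> 'a mat" where
  "monomial_mat n t e = mat n n (\<lambda>(a,b). if a = t b then e b else 0)"

lemma monomial_mat_carrier [simp]: "monomial_mat n t e \<in> carrier_mat n n"
  and monomial_mat_dim [simp]: "dim_row (monomial_mat n t e) = n" "dim_col (monomial_mat n t e) = n"
  by (simp_all add: monomial_mat_def)

lemma monomial_mat_entry: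
  "a < n \<Longrightarrow> b < n \<Longrightarrow> monomial_mat n t e $$ (a,b) = (if a = t b then e b else 0)"
  by (simp add: monomial_mat_def)

lemma monomial_mat_cong:
  "(\<And>b. b < n \<Longrightarrow> t b = t' b) \<Longrightarrow> (\<And>b. b < n \<Longrightarrow> e b = e' b) \<Longrightarrow>
    monomial_mat n t e = monomial_mat n t' e'"
  by (intro eq_matI) (auto simp: monomial_mat_entry)

lemma monomial_mat_mult:
  fixes e1 e2 :: "nat \<Rightarrow> 'a::semiring_0"
  assumes "\<And>b. b < n \<Longrightarrow> t2 b < n"
  shows "monomial_mat n t1 e1 * monomial_mat n t2 e2 = monomial_mat n (t1 \<circ> t2) (\<lambda>b. e1 (t2 b) * e2 b)"
proof (rule eq_matI)
  fix a c assume "a < dim_row (monomial_mat n (t1 \<circ> t2) (\<lambda>b. e1 (t2 b) * e2 b))"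
    "c < dim_col (monomial_mat n (t1 \<circ> t2) (\<lambda>b. e1 (t2 b) * e2 b))"
  then have a: "a < n" and c: "c < n" by auto
  have "(monomial_mat n t1 e1 * monomial_mat n t2 e2) $$ (a,c)
      = (\<Sum>b\<in>{0..<n}. monomial_mat n t1 e1 $$ (a,b) * monomial_mat n t2 e2 $$ (b,c))"
    using a c by (simp add: scalar_prod_def)
  also have "\<dots> = (\<Sum>b\<in>{0..<n}. if b = t2 c then (if a = t1 b then e1 b else 0) * e2 c else 0)"
    using a c by (intro sum.cong refl) (auto simp: monomial_mat_entry)
  also have "\<dots> = (if a = t1 (t2 c) then e1 (t2 c) * e2 c else 0)"
    using assms[OF c] by (simp add: sum.delta)
  finally show "(monomial_mat n t1 e1 * monomial_mat n t2 e2) $$ (a,c)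
      = monomial_mat n (t1 \<circ> t2) (\<lambda>b. e1 (t2 b) * e2 b) $$ (a,c)"
    using a c by (simp add: monomial_mat_entry)
qed auto

lemma monomial_mat_id: "monomial_mat n id (\<lambda>_. 1) = (1\<^sub>m n :: 'a::{zero,one} mat)"
  by (intro eq_matI) (auto simp: monomial_mat_entry)

lemma rel_defect_monomial_mat:
  fixes q :: "'k::field mat"
  assumes qp: "quantum_param n q"
    and q_invariant: "\<And>x y. x < n \<Longrightarrow> y < n \<Longrightarrow> q $$ (t x, t y) = q $$ (x,y)"
    and idx: "i < n" "j < n" "a < n" "b < n"
  shows "rel_defect q (monomial_mat n t e) i j a b = 0"
proof -
  let ?g = "monomial_mat n t e"
  have "q $$ (a,b) * q $$ (i,j) = 1" if "a = t j" "b = t i"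
    using that q_invariant[OF idx(2,1)] qp idx(1,2) unfolding quantum_param_def by auto
  then have "(1 - q $$ (a,b) * q $$ (i,j)) * (?g $$ (a,j) * ?g $$ (b,i)) = 0"
    using idx by (auto simp: monomial_mat_entry)
  moreover have "q $$ (a,b) = q $$ (i,j)" if "a = t i" "b = t j"
    using that q_invariant[OF idx(1,2)] by simp
  then have "(q $$ (a,b) - q $$ (i,j)) * (?g $$ (a,i) * ?g $$ (b,j)) = 0"
    using idx by (auto simp: monomial_mat_entry)
  ultimately show ?thesis unfolding rel_defect_def by (simp only: add_0)
qed

lemma monomial_mat_inverse:
  fixes e :: "nat \<Rightarrow> 'k::field"
  assumes t: "t permutes {..<n}" and e: "\<And>b. b < n \<Longrightarrow> e b \<noteq> 0"
  defines "h \<equiv> monomial_mat n (inv' t) (\<lambda>b. inverse (e (inv' t b)))"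
  shows "monomial_mat n t e * h = 1\<^sub>m n" "h * monomial_mat n t e = 1\<^sub>m n"
proof -
  have t_in: "t x < n" and t'_in: "inv' t x < n" if "x < n" for x
    using that permutes_in_image[OF t] permutes_in_image[OF permutes_inv[OF t]] by auto
  have "monomial_mat n t e * h
      = monomial_mat n (t \<circ> inv' t) (\<lambda>b. e (inv' t b) * inverse (e (inv' t b)))"
    unfolding h_def using t'_in by (rule monomial_mat_mult)
  also have "\<dots> = monomial_mat n id (\<lambda>_. 1)"
    by (rule monomial_mat_cong) (simp_all add: permutes_inverses(1)[OF t] e t'_in)
  finally show "monomial_mat n t e * h = 1\<^sub>m n" by (simp only: monomial_mat_id)
  have "h * monomial_mat n t e = monomial_mat n (inv' t \<circ> t) (\<lambda>b. inverse (e (inv' t (t b))) * e b)"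
    unfolding h_def using t_in by (rule monomial_mat_mult)
  also have "\<dots> = monomial_mat n id (\<lambda>_. 1)"
    by (rule monomial_mat_cong) (simp_all add: permutes_inverses(2)[OF t] e)
  finally show "h * monomial_mat n t e = 1\<^sub>m n" by (simp only: monomial_mat_id)
qed

lemma monomial_mat_mem_Aut_gr:
  fixes q :: "'k::field mat"
  assumes qp: "quantum_param n q" and two: "(2::'k) \<noteq> 0" and t: "t permutes {..<n}"
    and q_invariant: "\<And>x y. x < n \<Longrightarrow> y < n \<Longrightarrow> q $$ (t x, t y) = q $$ (x,y)"
    and e: "\<And>b. b < n \<Longrightarrow> e b \<noteq> 0"
  shows "monomial_mat n t e \<in> carrier (Aut_gr n q)"
proof -
  define h where "h = monomial_mat n (inv' t) (\<lambda>b. inverse (e (inv' t b)))"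
  have "q $$ (inv' t x, inv' t y) = q $$ (x,y)" if "x < n" "y < n" for x y
    using that q_invariant[of "inv' t x" "inv' t y"] permutes_in_image[OF permutes_inv[OF t]]
    by (simp add: permutes_inverses(1)[OF t])
  then have "preserves_rel n q (monomial_mat n t e)" "preserves_rel n q h"
    unfolding h_def preserves_rel_iff[OF qp two monomial_mat_carrier]
    using rel_defect_monomial_mat[OF qp q_invariant] rel_defect_monomial_mat[OF qp] by blast+
  then show ?thesis
    using monomial_mat_inverse[OF t e] unfolding Aut_gr_def h_def[symmetric]
    by (auto intro!: bexI[of _ h] simp: h_def)
qed

section \<open>Sign matrices of graphs\<close>

definition graph_param :: "nat \<Rightarrow> (nat \<Rightarrow> nat \<Rightarrow> bool) \<Rightarrow> 'k::field mat" where
  "graph_param n E = mat n n (\<lambda>(i,j). if E i j then -1 else 1)"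

definition graph_aut :: "nat \<Rightarrow> (nat \<Rightarrow> nat \<Rightarrow> bool) \<Rightarrow> (nat \<Rightarrow> nat) \<Rightarrow> bool" where
  "graph_aut n E t \<longleftrightarrow> t permutes {..<n} \<and> (\<forall>x<n. \<forall>y<n. E (t x) (t y) \<longleftrightarrow> E x y)"

lemma graph_param_entry: "i < n \<Longrightarrow> j < n \<Longrightarrow> graph_param n E $$ (i,j) = (if E i j then -1 else 1)"
  by (simp add: graph_param_def)

lemma quantum_param_graph_param:
  assumes "symp E" "irreflp E"
  shows "quantum_param n (graph_param n E :: 'k::field mat)"
  using assms unfolding quantum_param_def irreflp_def
  by (auto simp: graph_param_entry graph_param_def dest: sympD)

lemma graph_aut_id: "graph_aut n E id"
  by (simp add: graph_aut_def permutes_id)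

lemma graph_aut_image: "graph_aut n E t \<Longrightarrow> x < n \<Longrightarrow> t x < n"
  unfolding graph_aut_def using permutes_in_image[of t "{..<n}" x] by simp

lemma graph_aut_comp:
  assumes s: "graph_aut n E s" and t: "graph_aut n E t"
  shows "graph_aut n E (s \<circ> t)"
  using assms graph_aut_image[OF t] unfolding graph_aut_def by (simp add: permutes_compose)

lemma graph_aut_inv:
  assumes "graph_aut n E t"
  shows "graph_aut n E (inv' t)"
proof -
  have t: "t permutes {..<n}" and E: "\<And>x y. x < n \<Longrightarrow> y < n \<Longrightarrow> E (t x) (t y) \<longleftrightarrow> E x y"
    using assms unfolding graph_aut_def by auto
  have "E (inv' t x) (inv' t y) \<longleftrightarrow> E x y" if "x < n" "y < n" for x y
  proof -
    have "inv' t x < n" "inv' t y < n"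
      using that permutes_in_image[OF permutes_inv[OF t]] by auto
    from E[OF this] show ?thesis by (simp add: permutes_inverses(1)[OF t])
  qed
  then show ?thesis unfolding graph_aut_def using permutes_inv[OF t] by blast
qed

lemma graph_aut_complement:
  assumes irrefl: "\<And>x. x < n \<Longrightarrow> \<not> E x x"
  shows "graph_aut n (\<lambda>x y. x \<noteq> y \<and> \<not> E x y) t \<longleftrightarrow> graph_aut n E t"
proof (cases "t permutes {..<n}")
  case True
  have inj: "t x = t y \<longleftrightarrow> x = y" for x y
    using permutes_inj[OF True] by (auto dest: injD)
  have img: "t x < n" if "x < n" for x
    using that permutes_in_image[OF True] by simp
  have "E (t x) (t y) \<longleftrightarrow> E x y"
    if C: "\<forall>x<n. \<forall>y<n. (t x \<noteq> t y \<and> \<not> E (t x) (t y)) \<longleftrightarrow> (x \<noteq> y \<and> \<not> E x y)"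
      and xy: "x < n" "y < n" for x y
    using C[rule_format, OF xy] irrefl[OF xy(1)] irrefl[OF img[OF xy(1)]] inj
    by (cases "x = y") auto
  then show ?thesis unfolding graph_aut_def using True inj by auto
qed (simp add: graph_aut_def)

lemma graph_param_graph_aut:
  assumes "graph_aut n E t" "x < n" "y < n"
  shows "graph_param n E $$ (t x, t y) = graph_param n E $$ (x,y)"
  using assms graph_aut_image[OF assms(1)] unfolding graph_aut_def by (simp add: graph_param_entry)

lemma monomial_mat_mem_Aut_gr_graph_param:
  fixes e :: "nat \<Rightarrow> 'k::field"
  assumes "(2::'k) \<noteq> 0" "symp E" "irreflp E" "graph_aut n E t" "\<And>b. b < n \<Longrightarrow> e b \<noteq> 0"
  shows "monomial_mat n t e \<in> carrier (Aut_gr n (graph_param n E))"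
  using assms
  by (intro monomial_mat_mem_Aut_gr quantum_param_graph_param graph_param_graph_aut)
    (auto simp: graph_aut_def)

lemma preserves_graph_param_zero:
  fixes g :: "'k::field mat"
  assumes two: "(2::'k) \<noteq> 0" and E: "symp E" "irreflp E" and g: "g \<in> carrier_mat n n"
    and P: "preserves_rel n (graph_param n E) g"
    and idx: "i < n" "j < n" "a < n" "b < n" and "E i j" "\<not> E a b"
  shows "g $$ (a,j) * g $$ (b,i) = 0"
proof -
  let ?q = "graph_param n E :: 'k mat"
  have D: "rel_defect ?q g i j x y = 0" if "x < n" "y < n" for x y
    using P idx that unfolding preserves_rel_iff[OF quantum_param_graph_param[OF E] two g] by blast
  have qij: "?q $$ (i,j) = -1" and qab: "?q $$ (a,b) = 1" and qxx: "?q $$ (x,x) = 1" if "x < n" for x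
    using assms that irreflpD[OF E(2)] by (auto simp: graph_param_entry)
  have "4 * (g $$ (x,i) * g $$ (x,j)) = 0" if "x < n" for x
    using D[OF that that] unfolding rel_defect_def qij[OF that] qxx[OF that] by (simp add: algebra_simps)
  moreover have "(2::'k) * 2 \<noteq> 0" using two by (metis mult_eq_0_iff)
  then have "(4::'k) \<noteq> 0" by simp
  ultimately have row: "g $$ (x,i) * g $$ (x,j) = 0" if "x < n" for x
    using that by simp
  have "2 * (g $$ (a,j) * g $$ (b,i) + g $$ (a,i) * g $$ (b,j)) = 0"
    using D[OF idx(3,4)] unfolding rel_defect_def qij[OF idx(3)] qab[OF idx(3)] by (simp add: algebra_simps)
  then have "g $$ (a,j) * g $$ (b,i) + g $$ (a,i) * g $$ (b,j) = 0"
    using two mult_eq_0_iff by blast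
  then have eq: "g $$ (a,j) * g $$ (b,i) = - (g $$ (a,i) * g $$ (b,j))"
    by (simp add: eq_neg_iff_add_eq_0)
  \<comment> \<open>a nonzero left side would make both \<open>g\<^sub>a\<^sub>j\<close> and \<open>g\<^sub>a\<^sub>i\<close> nonzero, contradicting \<open>row\<close>\<close>
  show ?thesis
  proof (rule ccontr)
    assume nz: "g $$ (a,j) * g $$ (b,i) \<noteq> 0"
    then have "g $$ (a,i) \<noteq> 0" "g $$ (a,j) \<noteq> 0" using eq by auto
    then show False using row[OF idx(3)] by simp
  qed
qed

lemma permutes_reflects_imp_preserves:
  assumes p: "p permutes A" and A: "finite A"
    and reflect: "\<And>x y. x \<in> A \<Longrightarrow> y \<in> A \<Longrightarrow> R (p x) (p y) \<Longrightarrow> R x y"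
    and xy: "x \<in> A" "y \<in> A"
  shows "R (p x) (p y) \<longleftrightarrow> R x y"
proof
  assume "R x y"
  let ?f = "map_prod p p" and ?N = "{z \<in> A \<times> A. \<not> case_prod R z}"
  \<comment> \<open>\<open>?f\<close> maps the finite set of non-related pairs injectively into itself, hence onto itself\<close>
  have inj: "inj_on ?f (A \<times> A)"
    using permutes_inj[OF p] by (auto intro: map_prod_inj_on inj_on_subset)
  have "?f ` ?N \<subseteq> ?N"
    using reflect permutes_in_image[OF p] by auto
  then have "?f ` ?N = ?N"
    using A inj by (intro endo_inj_surj) (auto intro: inj_on_subset)
  show "R (p x) (p y)"
  proof (rule ccontr)
    assume "\<not> R (p x) (p y)"
    then have "(p x, p y) \<in> ?f ` ?N"
      using xy permutes_in_image[OF p] \<open>?f ` ?N = ?N\<close> by auto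
    then obtain z where "z \<in> ?N" "?f z = ?f (x, y)" by auto
    then have "z = (x, y)" using inj_onD[OF inj] xy by auto
    then show False using \<open>z \<in> ?N\<close> \<open>R x y\<close> by auto
  qed
qed (rule reflect[OF xy])

lemma det_nonzero_imp_ex_permutes:
  fixes A :: "'a::idom mat"
  assumes "A \<in> carrier_mat n n" "det A \<noteq> 0"
  shows "\<exists>p. p permutes {..<n} \<and> (\<forall>i<n. A $$ (i, p i) \<noteq> 0)"
proof -
  have "(\<Sum>p\<in>{p. p permutes {0..<n}}. signof p * (\<Prod>i = 0..<n. A $$ (i, p i))) \<noteq> 0"
    using assms unfolding det_def by auto
  then obtain p where "p permutes {0..<n}" "signof p * (\<Prod>i = 0..<n. A $$ (i, p i)) \<noteq> 0"
    by (rule sum.not_neutral_contains_not_neutral) auto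
  then show ?thesis by (auto simp: atLeast0LessThan)
qed

lemma eq_monomial_mat_if_support:
  assumes g: "g \<in> carrier_mat n n" and p: "p permutes {..<n}"
    and supp: "\<And>a c. a < n \<Longrightarrow> c < n \<Longrightarrow> g $$ (a,c) \<noteq> 0 \<Longrightarrow> c = p a"
  shows "g = monomial_mat n (inv' p) (\<lambda>c. g $$ (inv' p c, c))"
proof (rule eq_matI)
  fix a c assume "a < dim_row (monomial_mat n (inv' p) (\<lambda>c. g $$ (inv' p c, c)))"
    "c < dim_col (monomial_mat n (inv' p) (\<lambda>c. g $$ (inv' p c, c)))"
  then have ac: "a < n" "c < n" by auto
  have "g $$ (a,c) = 0" if "a \<noteq> inv' p c"
  proof (rule ccontr)
    assume "g $$ (a,c) \<noteq> 0"
    then have "c = p a" by (rule supp[OF ac])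
    then show False using that permutes_inverses(2)[OF p] by simp
  qed
  then show "g $$ (a,c) = monomial_mat n (inv' p) (\<lambda>c. g $$ (inv' p c, c)) $$ (a,c)"
    using ac by (auto simp: monomial_mat_entry)
qed (use g in auto)

lemma graph_aut_if_edge_zero:
  fixes g :: "'k::field mat"
  assumes E: "symp E" and p: "p permutes {..<n}"
    and diag: "\<And>x. x < n \<Longrightarrow> g $$ (x, p x) \<noteq> 0"
    and zero: "\<And>i j a b. i < n \<Longrightarrow> j < n \<Longrightarrow> a < n \<Longrightarrow> b < n \<Longrightarrow> E i j \<Longrightarrow> \<not> E a b \<Longrightarrow>
      g $$ (a,j) * g $$ (b,i) = 0"
  shows "graph_aut n E p"
proof -
  have img: "p x < n" if "x < n" for x
    using that permutes_in_image[OF p] by simp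
  have "E x y" if xy: "x < n" "y < n" and "E (p x) (p y)" for x y
  proof (rule ccontr)
    assume "\<not> E x y"
    moreover have "E (p y) (p x)" using \<open>E (p x) (p y)\<close> E by (blast dest: sympD)
    ultimately have "g $$ (x, p x) * g $$ (y, p y) = 0"
      using zero[OF img[OF xy(2)] img[OF xy(1)] xy] by blast
    then show False using diag xy by simp
  qed
  then have "E (p x) (p y) \<longleftrightarrow> E x y" if "x < n" "y < n" for x y
    using permutes_reflects_imp_preserves[OF p, of "E"] that by simp
  then show ?thesis unfolding graph_aut_def using p by blast
qed

lemma support_graph_aut_if_edge_zero:
  fixes g :: "'k::field mat"
  assumes E: "symp E" and aut: "graph_aut n E p"
    and diag: "\<And>x. x < n \<Longrightarrow> g $$ (x, p x) \<noteq> 0"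
    and zero: "\<And>i j a b. i < n \<Longrightarrow> j < n \<Longrightarrow> a < n \<Longrightarrow> b < n \<Longrightarrow> E i j \<Longrightarrow> \<not> E a b \<Longrightarrow>
      g $$ (a,j) * g $$ (b,i) = 0"
    and nbhd: "\<And>v a. v < n \<Longrightarrow> a < n \<Longrightarrow> (\<And>y. y < n \<Longrightarrow> E v y \<Longrightarrow> E a y) \<Longrightarrow> a = v"
    and ac: "a < n" "c < n" "g $$ (a,c) \<noteq> 0"
  shows "c = p a"
proof -
  have p: "p permutes {..<n}" using aut unfolding graph_aut_def by blast
  define v where "v = inv' p c"
  have v: "v < n" "p v = c"
    using ac(2) permutes_in_image[OF permutes_inv[OF p]] permutes_inverses(1)[OF p]
    unfolding v_def by auto
  have "a = v"
  proof (rule nbhd[OF v(1) ac(1)])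
    fix y assume y: "y < n" "E v y"
    have "E c (p y)" using aut y v unfolding graph_aut_def by blast
    then have "E (p y) c" using E by (blast dest: sympD)
    show "E a y"
    proof (rule ccontr)
      assume "\<not> E a y"
      then have "g $$ (a,c) * g $$ (y, p y) = 0"
        using zero[OF graph_aut_image[OF aut y(1)] ac(2) ac(1) y(1) \<open>E (p y) c\<close>] by blast
      then show False using ac(3) diag[OF y(1)] by simp
    qed
  qed
  then show ?thesis using v by simp
qed

theorem carrier_Aut_gr_graph_param:
  assumes two: "(2::'k::field) \<noteq> 0" and E: "symp E" "irreflp E"
    and nbhd: "\<And>v a. v < n \<Longrightarrow> a < n \<Longrightarrow> (\<And>y. y < n \<Longrightarrow> E v y \<Longrightarrow> E a y) \<Longrightarrow> a = v"
  shows "carrier (Aut_gr n (graph_param n E) :: 'k mat monoid)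
    = {monomial_mat n t e | t e. graph_aut n E t \<and> (\<forall>b<n. e b \<noteq> 0)}"
proof (intro equalityI subsetI)
  fix g :: "'k mat" assume "g \<in> carrier (Aut_gr n (graph_param n E))"
  then obtain h where g: "g \<in> carrier_mat n n" and h: "h \<in> carrier_mat n n" and "g * h = 1\<^sub>m n"
    and P: "preserves_rel n (graph_param n E) g"
    unfolding Aut_gr_def by auto
  then have "det g \<noteq> 0" using det_mult[OF g h] by auto
  then obtain p where p: "p permutes {..<n}" and diag: "\<And>x. x < n \<Longrightarrow> g $$ (x, p x) \<noteq> 0"
    using det_nonzero_imp_ex_permutes[OF g] by blast
  note zero = preserves_graph_param_zero[OF two E g P]
  have aut: "graph_aut n E p" by (rule graph_aut_if_edge_zero[OF E(1) p diag zero])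
  have "g = monomial_mat n (inv' p) (\<lambda>c. g $$ (inv' p c, c))"
    by (rule eq_monomial_mat_if_support[OF g p support_graph_aut_if_edge_zero[OF E(1) aut diag zero nbhd]])
  moreover have "g $$ (inv' p c, c) \<noteq> 0" if "c < n" for c
    using diag[OF graph_aut_image[OF graph_aut_inv[OF aut] that]] permutes_inverses(1)[OF p] by simp
  ultimately show "g \<in> {monomial_mat n t e | t e. graph_aut n E t \<and> (\<forall>b<n. e b \<noteq> 0)}"
    using graph_aut_inv[OF aut] by blast
next
  fix g :: "'k mat" assume "g \<in> {monomial_mat n t e | t e. graph_aut n E t \<and> (\<forall>b<n. e b \<noteq> 0)}"
  then show "g \<in> carrier (Aut_gr n (graph_param n E))"
    using monomial_mat_mem_Aut_gr_graph_param[OF two E] by blast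
qed

section \<open>The \<open>n\<close>-cycle and the dihedral group\<close>

definition cycle_adj :: "nat \<Rightarrow> nat \<Rightarrow> nat \<Rightarrow> bool" where
  "cycle_adj n x y \<longleftrightarrow> x + 1 = y \<or> y + 1 = x \<or> (x = 0 \<and> y + 1 = n) \<or> (y = 0 \<and> x + 1 = n)"

definition cycle_succ :: "nat \<Rightarrow> nat \<Rightarrow> nat" where
  "cycle_succ n x = (if x + 1 = n then 0 else x + 1)"

definition cycle_pred :: "nat \<Rightarrow> nat \<Rightarrow> nat" where
  "cycle_pred n x = (if x = 0 then n - 1 else x - 1)"

lemma symp_cycle_adj: "symp (cycle_adj n)"
  unfolding cycle_adj_def by (auto intro: sympI)

lemma cycle_adj_irrefl: "n \<noteq> 1 \<Longrightarrow> \<not> cycle_adj n x x"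
  unfolding cycle_adj_def by auto

lemma cycle_succ_pred:
  assumes "x < n"
  shows "cycle_succ n x < n" "cycle_pred n x < n" "cycle_adj n x (cycle_succ n x)"
    "cycle_adj n x (cycle_pred n x)"
  using assms unfolding cycle_succ_def cycle_pred_def cycle_adj_def by auto

lemma cycle_adj_cases:
  assumes "x < n" "y < n" "cycle_adj n x y"
  shows "y = cycle_succ n x \<or> y = cycle_pred n x"
  using assms unfolding cycle_succ_def cycle_pred_def cycle_adj_def by auto

lemma cycle_adj_two_neighbours:
  assumes "w < n" "x < n" "y < n" "z < n" "cycle_adj n w x" "cycle_adj n w y" "cycle_adj n w z"
    "x \<noteq> z" "y \<noteq> z"
  shows "x = y"
  using cycle_adj_cases[of w n x] cycle_adj_cases[of w n y] cycle_adj_cases[of w n z] assms by metis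

lemma cycle_complement_nbhd_subset_imp_eq:
  assumes n: "n \<ge> 4" and va: "v < n" "a < n"
    and sub: "\<And>y. y < n \<Longrightarrow> v \<noteq> y \<and> \<not> cycle_adj n v y \<Longrightarrow> a \<noteq> y \<and> \<not> cycle_adj n a y"
  shows "a = v"
proof (rule ccontr)
  assume "a \<noteq> v"
  then have "cycle_adj n v a"
    using sub[OF va(2)] by auto
  then have "a = cycle_succ n v \<or> a = cycle_pred n v"
    using cycle_adj_cases va by blast
  then show False
  proof
    assume "a = cycle_succ n v"
    then have "v \<noteq> cycle_succ n a \<and> \<not> cycle_adj n v (cycle_succ n a)"
      using n va unfolding cycle_adj_def cycle_succ_def by auto
    then show False
      using sub[of "cycle_succ n a"] cycle_succ_pred[OF va(2)] n va by auto
  next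
    assume "a = cycle_pred n v"
    then have "v \<noteq> cycle_pred n a \<and> \<not> cycle_adj n v (cycle_pred n a)"
      using n va unfolding cycle_adj_def cycle_pred_def by auto
    then show False
      using sub[of "cycle_pred n a"] cycle_succ_pred[OF va(2)] n va by auto
  qed
qed

lemma cycle_aut_eqI:
  assumes n: "n \<ge> 3" and s: "graph_aut n (cycle_adj n) s" and t: "graph_aut n (cycle_adj n) t"
    and "s 0 = t 0" "s 1 = t 1"
  shows "s = t"
proof -
  have "s x = t x" if "x < n" for x
    using that
  proof (induction x rule: less_induct)
    case (less x)
    show ?case
    proof (cases "x < 2")
      case True
      then have "x = 0 \<or> x = 1" by auto
      then show ?thesis using assms by auto
    next
      case False
      \<comment> \<open>\<open>s x\<close> and \<open>t x\<close> are neighbours of \<open>s (x - 1) = t (x - 1)\<close> different from \<open>s (x - 2) = t (x - 2)\<close>\<close>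
      have x: "x - 1 < n" "x - 2 < n" "x - 1 < x" "x - 2 < x" "x \<noteq> x - 2"
        using less.prems False by auto
      have adj: "cycle_adj n (x - 1) x" "cycle_adj n (x - 1) (x - 2)"
        using False unfolding cycle_adj_def by auto
      have IH: "s (x - 1) = t (x - 1)" "s (x - 2) = t (x - 2)"
        using less.IH x by auto
      have "s x \<noteq> s (x - 2)" "t x \<noteq> t (x - 2)"
        using x less.prems permutes_inj[of s "{..<n}"] permutes_inj[of t "{..<n}"] s t
        unfolding graph_aut_def by (auto dest: injD)
      moreover have "cycle_adj n (s (x - 1)) (s x)" "cycle_adj n (s (x - 1)) (t x)"
        "cycle_adj n (s (x - 1)) (s (x - 2))"
        using adj x less.prems s t IH unfolding graph_aut_def by auto
      ultimately show ?thesis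
        using cycle_adj_two_neighbours graph_aut_image[OF s] graph_aut_image[OF t] x less.prems IH
        by metis
    qed
  qed
  moreover have "s x = t x" if "x \<ge> n" for x
    using that s t permutes_not_in[of s "{..<n}" x] permutes_not_in[of t "{..<n}" x]
    unfolding graph_aut_def by auto
  ultimately show ?thesis by (metis not_le ext)
qed

definition cycle_rot :: "nat \<Rightarrow> nat \<Rightarrow> nat \<Rightarrow> nat" where
  "cycle_rot n k x = (if x < n then (x + k) mod n else x)"

definition cycle_refl :: "nat \<Rightarrow> nat \<Rightarrow> nat" where
  "cycle_refl n x = (if x < n then n - 1 - x else x)"

lemma cycle_rot_0: "cycle_rot n 0 = id"
  by (auto simp: cycle_rot_def)

lemma cycle_rot_Suc: "cycle_rot n (Suc k) = cycle_rot n 1 \<circ> cycle_rot n k"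
  by (auto simp: cycle_rot_def mod_Suc_eq)

lemma cycle_rot_one: "x < n \<Longrightarrow> cycle_rot n 1 x = cycle_succ n x"
  by (cases "x + 1 = n") (auto simp: cycle_rot_def cycle_succ_def)

lemma graph_aut_cycle_rot_one:
  assumes "n \<ge> 3"
  shows "graph_aut n (cycle_adj n) (cycle_rot n 1)"
  unfolding graph_aut_def
proof (intro conjI allI impI)
  have "inj_on (cycle_rot n 1) {..<n}"
  proof (rule inj_onI)
    fix x y assume xy: "x \<in> {..<n}" "y \<in> {..<n}" and "cycle_rot n 1 x = cycle_rot n 1 y"
    then have "cycle_succ n x = cycle_succ n y" by (simp only: lessThan_iff cycle_rot_one)
    then show "x = y" using xy by (auto simp: cycle_succ_def split: if_splits)
  qed
  then show "cycle_rot n 1 permutes {..<n}"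
    using assms by (intro inj_imp_permutes) (auto simp: cycle_rot_def)
  fix x y assume "x < n" "y < n"
  then show "cycle_adj n (cycle_rot n 1 x) (cycle_rot n 1 y) \<longleftrightarrow> cycle_adj n x y"
    unfolding cycle_rot_one[OF \<open>x < n\<close>] cycle_rot_one[OF \<open>y < n\<close>]
    using assms by (auto simp: cycle_succ_def cycle_adj_def)
qed

lemma graph_aut_cycle_rot:
  assumes "n \<ge> 3"
  shows "graph_aut n (cycle_adj n) (cycle_rot n k)"
proof (induction k)
  case 0
  show ?case unfolding cycle_rot_0 by (rule graph_aut_id)
next
  case (Suc k)
  show ?case unfolding cycle_rot_Suc[of n k] by (rule graph_aut_comp[OF graph_aut_cycle_rot_one[OF assms] Suc.IH])
qed

lemma graph_aut_cycle_refl: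
  assumes "n \<ge> 3"
  shows "graph_aut n (cycle_adj n) (cycle_refl n)"
  unfolding graph_aut_def
proof (intro conjI allI impI)
  show "cycle_refl n permutes {..<n}"
    by (rule inj_imp_permutes) (auto simp: inj_on_def cycle_refl_def)
  fix x y assume "x < n" "y < n"
  then show "cycle_adj n (cycle_refl n x) (cycle_refl n y) \<longleftrightarrow> cycle_adj n x y"
    using assms by (auto simp: cycle_refl_def cycle_adj_def)
qed

lemma cycle_aut_cases:
  assumes n: "n \<ge> 3" and t: "graph_aut n (cycle_adj n) t"
  obtains k where "t = cycle_rot n k" | k where "t = cycle_rot n k \<circ> cycle_refl n"
proof -
  define x0 where "x0 = t 0"
  have x0: "x0 < n" unfolding x0_def using graph_aut_image[OF t] n by simp
  have "cycle_adj n x0 (t 1)"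
    using t n unfolding graph_aut_def x0_def cycle_adj_def by auto
  then have "t 1 = cycle_succ n x0 \<or> t 1 = cycle_pred n x0"
    using cycle_adj_cases x0 graph_aut_image[OF t, of 1] n by auto
  then show ?thesis
  proof
    assume "t 1 = cycle_succ n x0"
    then have "t = cycle_rot n x0"
      using n x0 by (intro cycle_aut_eqI[OF n t graph_aut_cycle_rot[OF n]])
        (auto simp: x0_def cycle_rot_def cycle_succ_def)
    then show ?thesis by (rule that(1))
  next
    assume t1: "t 1 = cycle_pred n x0"
    have "(n - 1 - 1 + (x0 + 1)) mod n = cycle_pred n x0"
    proof (cases "x0 = 0")
      case False
      then have "n - 1 - 1 + (x0 + 1) = (x0 - 1) + n" using n by auto
      then have "(n - 1 - 1 + (x0 + 1)) mod n = (x0 - 1) mod n" by (metis mod_add_self2)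
      then show ?thesis using x0 False by (simp add: cycle_pred_def)
    qed (use n in \<open>simp add: cycle_pred_def\<close>)
    then have "t = cycle_rot n (x0 + 1) \<circ> cycle_refl n"
      using n x0 t1
      by (intro cycle_aut_eqI[OF n t graph_aut_comp[OF graph_aut_cycle_rot[OF n] graph_aut_cycle_refl[OF n]]])
        (auto simp: x0_def cycle_rot_def cycle_refl_def)
    then show ?thesis by (rule that(2))
  qed
qed

text \<open>Matrix indices are \<open>0, \<dots>, n - 1\<close>, whereas \<open>dihedral n\<close> permutes \<open>{1..n}\<close>.\<close>

definition lift_perm :: "(nat \<Rightarrow> nat) \<Rightarrow> nat \<Rightarrow> nat" where
  "lift_perm t i = (case i of 0 \<Rightarrow> 0 | Suc k \<Rightarrow> Suc (t k))"

lemma lift_perm_simps [simp]: "lift_perm t 0 = 0" "lift_perm t (Suc k) = Suc (t k)"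
  by (simp_all add: lift_perm_def)

lemma lift_perm_id: "lift_perm id = id"
proof
  show "lift_perm id i = id i" for i by (cases i) simp_all
qed

lemma lift_perm_comp: "lift_perm (s \<circ> t) = lift_perm s \<circ> lift_perm t"
proof
  show "lift_perm (s \<circ> t) i = (lift_perm s \<circ> lift_perm t) i" for i by (cases i) simp_all
qed

lemma lift_perm_permutes:
  assumes t: "t permutes {..<n}"
  shows "lift_perm t permutes {1..n}"
proof (rule inj_imp_permutes)
  show "inj_on (lift_perm t) {1..n}"
  proof (rule inj_onI)
    fix i j assume "i \<in> {1..n}" "j \<in> {1..n}" "lift_perm t i = lift_perm t j"
    then obtain k l where kl: "i = Suc k" "j = Suc l" and "t k = t l"
      by (cases i; cases j) auto
    with injD[OF permutes_inj[OF t] this(3)] show "i = j" by simp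
  qed
  show "lift_perm t i \<in> {1..n}" if i: "i \<in> {1..n}" for i
  proof -
    obtain k where "i = Suc k" "k < n" using i by (cases i) auto
    moreover have "t k < n" using \<open>k < n\<close> permutes_in_image[OF t] by simp
    ultimately show ?thesis by simp
  qed
  show "lift_perm t i = i" if "i \<notin> {1..n}" for i
    using that permutes_not_in[OF t] by (cases i) auto
qed simp

lemma lift_perm_inv:
  assumes t: "t permutes {..<n}"
  shows "inv' (lift_perm t) = lift_perm (inv' t)"
  by (rule inv_unique_comp) (simp_all add: lift_perm_comp[symmetric] permutes_inv_o[OF t] lift_perm_id)

lemma rot_perm_eq_lift_perm: "n \<ge> 1 \<Longrightarrow> rot_perm n = lift_perm (cycle_rot n 1)"
  by (auto simp: fun_eq_iff rot_perm_def lift_perm_def cycle_rot_def split: nat.split)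

lemma refl_perm_eq_lift_perm: "n \<ge> 1 \<Longrightarrow> refl_perm n = lift_perm (cycle_refl n)"
proof (rule ext)
  fix i assume n: "n \<ge> 1"
  show "refl_perm n i = lift_perm (cycle_refl n) i"
  proof (cases i)
    case (Suc k)
    then show ?thesis
      using n by (cases "k = 0") (auto simp: refl_perm_def lift_perm_def cycle_refl_def)
  qed (simp add: refl_perm_def lift_perm_def)
qed

lemma dihedral_comp: "s \<in> dihedral n \<Longrightarrow> t \<in> dihedral n \<Longrightarrow> s \<circ> t \<in> dihedral n"
  using generate.eng[of s "sym_group n" _ t] unfolding dihedral_def sym_group_mult .

lemma lift_perm_cycle_rot_mem_dihedral:
  assumes n: "n \<ge> 1"
  shows "lift_perm (cycle_rot n k) \<in> dihedral n"
proof (induction k)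
  case 0
  show ?case
    using generate.one[of "sym_group n"]
    unfolding dihedral_def cycle_rot_0 lift_perm_id sym_group_one .
next
  case (Suc k)
  have "rot_perm n \<in> dihedral n" unfolding dihedral_def by (intro generate.incl) simp
  moreover have "lift_perm (cycle_rot n (Suc k)) = rot_perm n \<circ> lift_perm (cycle_rot n k)"
    using rot_perm_eq_lift_perm[of n] n by (simp add: cycle_rot_Suc[of n k] lift_perm_comp)
  ultimately show ?case using dihedral_comp Suc.IH by metis
qed

lemma dihedral_eq_lift_perm_cycle_aut:
  assumes n: "n \<ge> 3"
  shows "dihedral n = lift_perm ` {t. graph_aut n (cycle_adj n) t}" (is "_ = ?L")
proof (intro equalityI subsetI)
  have "n \<ge> 1" using n by simp
  have "rot_perm n \<in> ?L" "refl_perm n \<in> ?L"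
    unfolding rot_perm_eq_lift_perm[OF \<open>n \<ge> 1\<close>] refl_perm_eq_lift_perm[OF \<open>n \<ge> 1\<close>]
    by (intro imageI CollectI graph_aut_cycle_rot[OF n] graph_aut_cycle_refl[OF n])+
  then have gens: "h \<in> ?L" if "h \<in> {rot_perm n, refl_perm n}" for h
    using that by blast
  fix s assume "s \<in> dihedral n"
  then show "s \<in> ?L" unfolding dihedral_def
  proof (induction rule: generate.induct)
    case one
    have "lift_perm id \<in> ?L" by (intro imageI CollectI graph_aut_id)
    then show ?case unfolding sym_group_one lift_perm_id .
  next
    case (incl h)
    then show ?case by (rule gens)
  next
    case (inv h)
    then obtain t where t: "graph_aut n (cycle_adj n) t" and h: "h = lift_perm t"
      using gens by blast
    then have tp: "t permutes {..<n}" unfolding graph_aut_def by blast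
    have "inv\<^bsub>sym_group n\<^esub> h = inv' h"
      unfolding h by (intro sym_group_inv_equality) (unfold sym_group_carrier, rule lift_perm_permutes[OF tp])
    also have "\<dots> = lift_perm (inv' t)" unfolding h by (rule lift_perm_inv[OF tp])
    finally have "inv\<^bsub>sym_group n\<^esub> h = lift_perm (inv' t)" .
    then show ?case using graph_aut_inv[OF t] by blast
  next
    case (eng h1 h2)
    then obtain t1 t2 where t: "graph_aut n (cycle_adj n) t1" "graph_aut n (cycle_adj n) t2"
      and h: "h1 = lift_perm t1" "h2 = lift_perm t2" by blast
    have "lift_perm (t1 \<circ> t2) \<in> ?L" by (intro imageI CollectI graph_aut_comp t)
    then show ?case unfolding sym_group_mult lift_perm_comp h .
  qed
next
  fix s assume "s \<in> ?L"
  have "n \<ge> 1" using n by simp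
  obtain t where t: "graph_aut n (cycle_adj n) t" and s: "s = lift_perm t"
    using \<open>s \<in> ?L\<close> by blast
  have "lift_perm (cycle_refl n) \<in> dihedral n"
    unfolding dihedral_def refl_perm_eq_lift_perm[symmetric, OF \<open>n \<ge> 1\<close>] by (intro generate.incl) simp
  with cycle_aut_cases[OF n t] show "s \<in> dihedral n"
    unfolding s using lift_perm_cycle_rot_mem_dihedral[OF \<open>n \<ge> 1\<close>] dihedral_comp
    by (metis lift_perm_comp)
qed

lemma diag_matrix_eq_monomial_mat: "diag_matrix n d = monomial_mat n id d"
  by (intro eq_matI) (auto simp: diag_matrix_def monomial_mat_entry)

lemma perm_matrix_lift_perm: "perm_matrix n (lift_perm t) = (monomial_mat n t (\<lambda>_. 1) :: 'k::field mat)"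
  by (intro eq_matI) (auto simp: perm_matrix_def monomial_mat_entry)

lemma carrier_monomial_dihedral:
  assumes n: "n \<ge> 3"
  shows "carrier (monomial_dihedral n :: 'k::field mat monoid)
    = {monomial_mat n t e | t e. graph_aut n (cycle_adj n) t \<and> (\<forall>b<n. e b \<noteq> 0)}"
proof -
  have prod: "diag_matrix n d * perm_matrix n (lift_perm t) = monomial_mat n t (\<lambda>b. d (t b))"
    if "graph_aut n (cycle_adj n) t" for t and d :: "nat \<Rightarrow> 'k"
    unfolding diag_matrix_eq_monomial_mat perm_matrix_lift_perm
    using monomial_mat_mult[of n t id d "\<lambda>_. 1"] graph_aut_image[OF that] by simp
  show ?thesis
  proof (intro equalityI subsetI)
    fix g :: "'k mat" assume "g \<in> carrier (monomial_dihedral n)"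
    then obtain d t where d: "\<forall>i<n. d i \<noteq> 0" and t: "graph_aut n (cycle_adj n) t"
      and g: "g = diag_matrix n d * perm_matrix n (lift_perm t)"
      unfolding monomial_dihedral_def dihedral_eq_lift_perm_cycle_aut[OF n] by auto
    have "\<forall>b<n. d (t b) \<noteq> 0" using d graph_aut_image[OF t] by blast
    then show "g \<in> {monomial_mat n t e | t e. graph_aut n (cycle_adj n) t \<and> (\<forall>b<n. e b \<noteq> 0)}"
      using t unfolding g prod[OF t] by blast
  next
    fix g :: "'k mat"
    assume "g \<in> {monomial_mat n t e | t e. graph_aut n (cycle_adj n) t \<and> (\<forall>b<n. e b \<noteq> 0)}"
    then obtain t e where t: "graph_aut n (cycle_adj n) t" and e: "\<forall>b<n. e b \<noteq> 0"
      and g: "g = monomial_mat n t e" by blast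
    define d where "d i = e (inv' t i)" for i
    have "t permutes {..<n}" using t unfolding graph_aut_def by blast
    then have "g = diag_matrix n d * perm_matrix n (lift_perm t)"
      unfolding g prod[OF t] d_def by (intro monomial_mat_cong) (simp_all add: permutes_inverses(2))
    moreover have "\<forall>i<n. d i \<noteq> 0"
      using e graph_aut_image[OF graph_aut_inv[OF t]] unfolding d_def by blast
    ultimately show "g \<in> carrier (monomial_dihedral n)"
      unfolding monomial_dihedral_def dihedral_eq_lift_perm_cycle_aut[OF n] using t by (simp; blast)
  qed
qed

theorem proposition3p3:
  fixes n :: nat
  assumes "(2::'k::field) \<noteq> 0"
    and "n \<ge> 4"
  shows "\<exists>q :: 'k mat. quantum_param n q \<and> Aut_gr n q \<cong> (monomial_dihedral n :: 'k mat monoid)"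
proof -
  let ?E = "\<lambda>x y. x \<noteq> y \<and> \<not> cycle_adj n x y"
  have n: "n \<ge> 3" "n \<noteq> 1" using assms(2) by auto
  have E: "symp ?E" "irreflp ?E"
    using symp_cycle_adj[of n] by (auto intro: sympI irreflpI dest: sympD)
  have "carrier (Aut_gr n (graph_param n ?E) :: 'k mat monoid)
      = {monomial_mat n t e | t e. graph_aut n ?E t \<and> (\<forall>b<n. e b \<noteq> 0)}"
    using carrier_Aut_gr_graph_param[OF assms(1) E] cycle_complement_nbhd_subset_imp_eq[OF assms(2)]
    by blast
  also have "\<dots> = carrier (monomial_dihedral n :: 'k mat monoid)"
    unfolding carrier_monomial_dihedral[OF n(1)] graph_aut_complement[OF cycle_adj_irrefl[OF n(2)]] ..
  finally have "Aut_gr n (graph_param n ?E) = (monomial_dihedral n :: 'k mat monoid)"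
    unfolding Aut_gr_def monomial_dihedral_def by simp
  then show ?thesis using quantum_param_graph_param[OF E] iso_refl by metis
qed

end
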